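(* Let $p,q\ge1$, $\varepsilon\ge0$, $\Xi\subseteq\mathbb{R}^n$, $\mathcal{X}\subseteq\mathbb{R}^m$, and $F:\mathbb{R}^m\times\mathbb{R}^n\to\mathbb{R}$ such that for each $x\in\mathcal{X}$, $F(x,\cdot)$ is Lipschitz on $\Xi$ with respect to $\|\cdot\|_q$, with constant $\gamma_{x,F,q}=\|F(x,\cdot)\|_{\mathrm{Lip},q}<\infty$. Let $\widehat{\xi}_1,\dots,\widehat{\xi}_N\in\Xi$, $\widehat{\mathbb{P}}_N=\frac1N\sum_{i=1}^N\delta_{\widehat{\xi}_i}$ and $\widehat{\mathbb{P}}_N^{x,F}=\frac1N\sum_{i=1}^N\delta_{F(x,\widehat{\xi}_i)}$. Then for every $x\in\mathcal{X}$, $$\sup_{\mathbb{Q}\in\mathcal{B}_\varepsilon(\widehat{\mathbb{P}}_N)}\mathbb{E}_{\xi\sim\mathbb{Q}}[F(x,\xi)]\le\sup_{\mathbb{Q}\in\mathcal{B}_{\varepsilon\gamma_{x,F,q}}(\widehat{\mathbb{P}}_N^{x,F})}\mathbb{E}_{\zeta\sim\mathbb{Q}}[\zeta].$$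
   Context: $W_p$ denotes the $p$-Wasserstein distance: for a set $S$ with metric $\mathbf{d}$ and probability measures $\mu,\nu$ on $S$ with finite $p$-th moments, $W_p(\mu,\nu)=(\inf_\Pi\int\mathbf{d}^p\,d\Pi)^{1/p}$ over couplings $\Pi$ of $\mu,\nu$; $\mathcal{P}_p(S)$ is the set of such measures. The standard ball is $\mathcal{B}_\varepsilon(\widehat{\mathbb{P}}_N)=\{\mathbb{Q}\in\mathcal{P}_p(\Xi):W_p(\mathbb{Q},\widehat{\mathbb{P}}_N)\le\varepsilon\}$ with cost $\mathbf{d}(\xi,\zeta)=\|\xi-\zeta\|_q$. The decision-dependent ball is $\mathcal{B}_{r}(\widehat{\mathbb{P}}_N^{x,F})=\{\mathbb{Q}\in\mathcal{P}_p(F(x,\Xi)):W_p(\mathbb{Q},\widehat{\mathbb{P}}_N^{x,F})\le r\}$ with cost $|s-t|$ on $\mathbb{R}$, where $F(x,\Xi)=\{F(x,\xi):\xi\in\Xi\}$. The $q$-Lipschitz norm is $\|f\|_{\mathrm{Lip},q}=\sup_{\xi\ne\zeta\in\Xi}(f(\xi)-f(\zeta))/\|\xi-\zeta\|_q$. *)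

theory Defs
  imports "HOL-Probability.Probability"
begin

definition qnorm :: "ereal \<Rightarrow> real ^ 'n \<Rightarrow> real" where
  "qnorm q v = (if q = \<infinity> then Max (range (\<lambda>i. \<bar>v $ i\<bar>))
                else (\<Sum>i\<in>UNIV. \<bar>v $ i\<bar> powr real_of_ereal q) powr (1 / real_of_ereal q))"

definition lipnorm :: "ereal \<Rightarrow> (real ^ 'n) set \<Rightarrow> (real ^ 'n \<Rightarrow> real) \<Rightarrow> ereal" where
  "lipnorm q S f = (SUP z \<in> {(\<xi>, \<zeta>). \<xi> \<in> S \<and> \<zeta> \<in> S \<and> \<xi> \<noteq> \<zeta>}.
                      ereal ((f (fst z) - f (snd z)) / qnorm q (fst z - snd z)))"

definition couplings :: "'a measure \<Rightarrow> 'a measure \<Rightarrow> ('a \<times> 'a) measure set" where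
  "couplings \<mu> \<nu> = {C. prob_space C \<and> sets C = sets (\<mu> \<Otimes>\<^sub>M \<nu>)
                        \<and> distr C \<mu> fst = \<mu> \<and> distr C \<nu> snd = \<nu>}"

definition wasserstein :: "real \<Rightarrow> ('a \<Rightarrow> 'a \<Rightarrow> real) \<Rightarrow> 'a measure \<Rightarrow> 'a measure \<Rightarrow> real" where
  "wasserstein p d \<mu> \<nu> =
     (enn2real (INF C \<in> couplings \<mu> \<nu>. \<integral>\<^sup>+ z. ennreal (d (fst z) (snd z) powr p) \<partial>C)) powr (1 / p)"

definition Pp :: "real \<Rightarrow> 'a::real_normed_vector set \<Rightarrow> 'a measure set" where
  "Pp p S = {Q. sets Q = sets borel \<and> prob_space Q \<and> (AE \<xi> in Q. \<xi> \<in> S)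
               \<and> (\<integral>\<^sup>+ \<xi>. ennreal (norm \<xi> powr p) \<partial>Q) < \<infinity>}"

definition wball :: "real \<Rightarrow> ('a::real_normed_vector \<Rightarrow> 'a \<Rightarrow> real) \<Rightarrow> 'a set \<Rightarrow> 'a measure \<Rightarrow> real \<Rightarrow> 'a measure set" where
  "wball p d S P r = {Q \<in> Pp p S. wasserstein p d Q P \<le> r}"

definition empirical :: "nat \<Rightarrow> (nat \<Rightarrow> 'a::topological_space) \<Rightarrow> 'a measure" where
  "empirical N pts = distr (measure_pmf (pmf_of_set {..<N})) borel pts"

end

(*
  Fix Q in the \<epsilon>-ball around the empirical measure P and write f = F x, L = lipnorm q \<Xi> f.
  The witness on the right-hand side is the image measure f(Q): pushing a coupling of Q and P
  forward along f \<times> f couples f(Q) and f(P), and |f a - f b| \<le> L ||a - b||_q bounds its cost by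
  L^p times the original one. Hence W_p(f(Q), f(P)) \<le> L W_p(Q, P) \<le> \<epsilon> L, while the mean of
  f(Q) is the Q-expectation of f.

  Neither \<Xi> nor f is assumed measurable, so f is first replaced by a Borel function g agreeing
  with it on a \<sigma>-compact set A \<subseteq> \<Xi> that carries Q and the sample points (inner regularity).
  On A the function g is Lipschitz, so g(Q) keeps a finite p-th moment, and integrating f against
  the completion of Q is the same as integrating g against Q.
*)

theory Submission
  imports Defs
begin

section \<open>q-norms and the q-Lipschitz norm\<close>

lemma qnorm_nonneg: "0 \<le> qnorm q v"
  by (auto simp: qnorm_def Max_ge_iff)

lemma qnorm_uminus: "qnorm q (- v) = qnorm q v"
  by (simp add: qnorm_def)

lemma qnorm_minus_commute: "qnorm q (a - b) = qnorm q (b - a)"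
  by (metis minus_diff_eq qnorm_uminus)

lemma qnorm_pos:
  fixes v :: "real ^ 'n"
  assumes "v \<noteq> 0"
  shows "0 < qnorm q v"
proof -
  obtain i where i: "v $ i \<noteq> 0"
    using assms by (metis vec_eq_iff zero_index)
  show ?thesis
  proof (cases "q = \<infinity>")
    case True
    then show ?thesis
      using i unfolding qnorm_def by (auto simp: Max_gr_iff)
  next
    case False
    have "0 < (\<Sum>i\<in>UNIV. \<bar>v $ i\<bar> powr real_of_ereal q)"
      using i by (intro sum_pos2[where i=i]) auto
    then show ?thesis
      using False unfolding qnorm_def by simp
  qed
qed

lemma qnorm_le_card_norm:
  fixes v :: "real ^ 'n"
  assumes "1 \<le> q"
  shows "qnorm q v \<le> real CARD('n) * norm v"
proof (cases "q = \<infinity>")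
  case True
  have "Max (range (\<lambda>i. \<bar>v $ i\<bar>)) \<le> norm v"
    by (auto simp: component_le_norm_cart)
  also have "\<dots> \<le> real CARD('n) * norm v"
    using mult_right_mono[of 1 "real CARD('n)" "norm v"] by simp
  finally show ?thesis
    using True unfolding qnorm_def by simp
next
  case False
  then obtain r where r: "q = ereal r" "1 \<le> r"
    using assms by (cases q) auto
  define n where "n = real CARD('n)"
  have "1 \<le> n"
    unfolding n_def by simp
  have "(\<Sum>i\<in>UNIV. \<bar>v $ i\<bar> powr r) \<le> (\<Sum>i\<in>(UNIV :: 'n set). norm v powr r)"
    using r(2) by (intro sum_mono powr_mono2) (auto simp: component_le_norm_cart)
  then have "(\<Sum>i\<in>UNIV. \<bar>v $ i\<bar> powr r) powr (1 / r) \<le> (n * norm v powr r) powr (1 / r)"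
    using r(2) by (intro powr_mono2) (auto simp: n_def intro: sum_nonneg)
  also have "\<dots> = n powr (1 / r) * norm v"
    using r(2) \<open>1 \<le> n\<close> by (simp add: powr_mult powr_powr)
  also have "\<dots> \<le> n * norm v"
    using r(2) \<open>1 \<le> n\<close> powr_mono[of "1 / r" 1 n] by (intro mult_right_mono) auto
  finally show ?thesis
    using r unfolding qnorm_def n_def by simp
qed

lemma borel_measurable_qnorm: "qnorm q \<in> borel_measurable borel"
  unfolding qnorm_def by (cases "q = \<infinity>") simp_all

lemma lipnorm_ge_abs_quotient:
  assumes "a \<in> S" "b \<in> S" "a \<noteq> b"
  shows "ereal (\<bar>f a - f b\<bar> / qnorm q (a - b)) \<le> lipnorm q S f"
proof -
  have "ereal ((f x - f y) / qnorm q (x - y)) \<le> lipnorm q S f" if "x \<in> S" "y \<in> S" "x \<noteq> y" for x y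
    unfolding lipnorm_def using that by (intro SUP_upper2[where i="(x, y)"]) auto
  from this[of a b] this[of b a] assms show ?thesis
    by (cases "0 \<le> f a - f b") (auto simp: qnorm_minus_commute[of q b a])
qed

(* lipnorm is -\<infinity> if S has fewer than two points, and real_of_ereal maps both infinities to 0. *)
lemma lipnorm_nonneg: "0 \<le> real_of_ereal (lipnorm q S f)"
proof (cases "\<exists>a\<in>S. \<exists>b\<in>S. a \<noteq> b")
  case True
  then obtain a b where "a \<in> S" "b \<in> S" "a \<noteq> b"
    by blast
  then have "0 \<le> lipnorm q S f"
    using lipnorm_ge_abs_quotient[of a S b f q] qnorm_nonneg[of q "a - b"]
    by (meson abs_ge_zero divide_nonneg_nonneg ereal_less_eq(5) order_trans)
  then show ?thesis
    by (simp add: real_of_ereal_pos)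
next
  case False
  then have no_pairs: "{(\<xi>, \<zeta>). \<xi> \<in> S \<and> \<zeta> \<in> S \<and> \<xi> \<noteq> \<zeta>} = {}"
    by auto
  show ?thesis
    unfolding lipnorm_def no_pairs by (simp add: bot_ereal_def)
qed

lemma abs_diff_le_lipnorm:
  fixes f :: "real ^ 'n \<Rightarrow> real"
  assumes "lipnorm q S f < \<infinity>" "a \<in> S" "b \<in> S"
  shows "\<bar>f a - f b\<bar> \<le> real_of_ereal (lipnorm q S f) * qnorm q (a - b)"
proof (cases "a = b")
  case False
  have "ereal (\<bar>f a - f b\<bar> / qnorm q (a - b)) \<le> lipnorm q S f"
    using lipnorm_ge_abs_quotient assms(2,3) False .
  then have "\<bar>f a - f b\<bar> / qnorm q (a - b) \<le> real_of_ereal (lipnorm q S f)"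
    using assms(1) by (cases "lipnorm q S f") auto
  then show ?thesis
    using qnorm_pos[of "a - b" q] False by (simp add: divide_le_eq mult.commute)
qed (simp add: lipnorm_nonneg qnorm_nonneg)

lemma lipschitz_on_qnorm:
  fixes f :: "real ^ 'n \<Rightarrow> real"
  assumes "1 \<le> q" "0 \<le> L" "\<And>a b. a \<in> S \<Longrightarrow> b \<in> S \<Longrightarrow> \<bar>f a - f b\<bar> \<le> L * qnorm q (a - b)"
  shows "lipschitz_on (L * CARD('n)) S f"
proof (rule lipschitz_onI)
  fix a b assume "a \<in> S" "b \<in> S"
  then have "\<bar>f a - f b\<bar> \<le> L * (CARD('n) * norm (a - b))"
    using assms qnorm_le_card_norm[OF assms(1), of "a - b"] by (meson mult_left_mono order_trans)
  then show "dist (f a) (f b) \<le> L * CARD('n) * dist a b"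
    by (simp add: dist_real_def dist_norm mult.assoc)
qed (use assms(2) in simp)

section \<open>Couplings\<close>

lemma couplingsD:
  assumes "C \<in> couplings M N"
  shows "prob_space C" "sets C = sets (M \<Otimes>\<^sub>M N)" "distr C M fst = M" "distr C N snd = N"
  using assms unfolding couplings_def by auto

lemma measurable_fst_coupling: "C \<in> couplings M N \<Longrightarrow> fst \<in> C \<rightarrow>\<^sub>M M"
  using measurable_cong_sets[OF couplingsD(2) refl] measurable_fst by blast

lemma measurable_snd_coupling: "C \<in> couplings M N \<Longrightarrow> snd \<in> C \<rightarrow>\<^sub>M N"
  using measurable_cong_sets[OF couplingsD(2) refl] measurable_snd by blast

lemma AE_coupling_fst:
  assumes C: "C \<in> couplings M N" and "A \<in> sets M" "AE x in M. x \<in> A"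
  shows "AE z in C. fst z \<in> A"
proof -
  have "AE x in distr C M fst. x \<in> A"
    using assms(3) by (simp only: couplingsD(3)[OF C])
  then show ?thesis
    using assms(2) by (simp add: AE_distr_iff[OF measurable_fst_coupling[OF C]])
qed

lemma AE_coupling_snd:
  assumes C: "C \<in> couplings M N" and "A \<in> sets N" "AE x in N. x \<in> A"
  shows "AE z in C. snd z \<in> A"
proof -
  have "AE x in distr C N snd. x \<in> A"
    using assms(3) by (simp only: couplingsD(4)[OF C])
  then show ?thesis
    using assms(2) by (simp add: AE_distr_iff[OF measurable_snd_coupling[OF C]])
qed

lemma nn_integral_coupling_fst:
  assumes C: "C \<in> couplings M N" and "h \<in> borel_measurable M"
  shows "(\<integral>\<^sup>+ z. h (fst z) \<partial>C) = (\<integral>\<^sup>+ x. h x \<partial>M)"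
  using nn_integral_distr[OF measurable_fst_coupling[OF C], of h] assms
  by (simp add: couplingsD(3)[OF C])

lemma nn_integral_coupling_snd:
  assumes C: "C \<in> couplings M N" and "h \<in> borel_measurable N"
  shows "(\<integral>\<^sup>+ z. h (snd z) \<partial>C) = (\<integral>\<^sup>+ x. h x \<partial>N)"
  using nn_integral_distr[OF measurable_snd_coupling[OF C], of h] assms
  by (simp add: couplingsD(4)[OF C])

lemma measurable_map_prod_coupling:
  assumes C: "C \<in> couplings M N" and "g \<in> M \<rightarrow>\<^sub>M K" "g \<in> N \<rightarrow>\<^sub>M K"
  shows "map_prod g g \<in> C \<rightarrow>\<^sub>M K \<Otimes>\<^sub>M K"
  using measurable_compose[OF measurable_fst_coupling[OF C] assms(2)]
    measurable_compose[OF measurable_snd_coupling[OF C] assms(3)]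
  by (auto intro!: measurable_Pair simp: map_prod_def case_prod_beta comp_def)

lemma pair_measure_in_couplings:
  assumes "prob_space M" "prob_space N"
  shows "M \<Otimes>\<^sub>M N \<in> couplings M N"
proof -
  interpret M: prob_space M by fact
  interpret N: prob_space N by fact
  interpret pair_sigma_finite M N ..
  have "distr (M \<Otimes>\<^sub>M N) N snd
      = distr (distr (N \<Otimes>\<^sub>M M) (M \<Otimes>\<^sub>M N) (\<lambda>(x, y). (y, x))) N snd"
    by (simp only: distr_pair_swap[symmetric])
  also have "\<dots> = distr (N \<Otimes>\<^sub>M M) N fst"
    by (subst distr_distr) (auto simp: comp_def case_prod_beta intro!: distr_cong)
  also have "\<dots> = N"
    by (rule M.distr_pair_fst)
  finally show ?thesis
    unfolding couplings_def using assms by (auto intro: prob_space_pair N.distr_pair_fst)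
qed

lemma distr_in_couplings:
  assumes C: "C \<in> couplings M N" and gM: "g \<in> M \<rightarrow>\<^sub>M K" and gN: "g \<in> N \<rightarrow>\<^sub>M K"
  shows "distr C (K \<Otimes>\<^sub>M K) (map_prod g g) \<in> couplings (distr M K g) (distr N K g)"
proof -
  have h: "map_prod g g \<in> C \<rightarrow>\<^sub>M K \<Otimes>\<^sub>M K"
    using measurable_map_prod_coupling[OF C gM gN] .
  have "distr (distr C (K \<Otimes>\<^sub>M K) (map_prod g g)) (distr M K g) fst = distr (distr C M fst) K g"
    using h measurable_fst_coupling[OF C] gM by (simp add: distr_distr comp_def cong: distr_cong)
  moreover have "distr (distr C (K \<Otimes>\<^sub>M K) (map_prod g g)) (distr N K g) snd = distr (distr C N snd) K g"
    using h measurable_snd_coupling[OF C] gN by (simp add: distr_distr comp_def cong: distr_cong)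
  moreover have "sets (distr C (K \<Otimes>\<^sub>M K) (map_prod g g)) = sets (distr M K g \<Otimes>\<^sub>M distr N K g)"
    by (simp cong: sets_pair_measure_cong)
  ultimately show ?thesis
    using C prob_space.prob_space_distr[OF couplingsD(1)[OF C] h]
    unfolding couplings_def by auto
qed

section \<open>Transport cost and Wasserstein distance\<close>

definition transport_cost ::
    "real \<Rightarrow> ('a \<Rightarrow> 'a \<Rightarrow> real) \<Rightarrow> 'a measure \<Rightarrow> 'a measure \<Rightarrow> ennreal" where
  "transport_cost p d \<mu> \<nu> =
     (INF C \<in> couplings \<mu> \<nu>. \<integral>\<^sup>+ z. ennreal (d (fst z) (snd z) powr p) \<partial>C)"

lemma wasserstein_eq_transport_cost:
  "wasserstein p d \<mu> \<nu> = enn2real (transport_cost p d \<mu> \<nu>) powr (1 / p)"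
  by (simp add: wasserstein_def transport_cost_def)

lemma ennreal_mult_INF:
  fixes f :: "'a \<Rightarrow> ennreal"
  assumes "S \<noteq> {}"
  shows "ennreal c * (INF x\<in>S. f x) = (INF x\<in>S. ennreal c * f x)"
proof -
  have "continuous (at_right (Inf (f ` S))) (\<lambda>x. ennreal c * x)"
    unfolding continuous_within by (intro ennreal_tendsto_cmult tendsto_ident_at) simp
  then show ?thesis
    using continuous_at_Inf_mono[of "\<lambda>x. ennreal c * x" "f ` S"] assms
    by (simp add: mono_def mult_left_mono image_comp)
qed

lemma transport_cost_distr_le:
  fixes d :: "'a \<Rightarrow> 'a \<Rightarrow> real" and d' :: "'b \<Rightarrow> 'b \<Rightarrow> real"
  assumes "prob_space M" "prob_space N"
    and gM: "g \<in> M \<rightarrow>\<^sub>M K" and gN: "g \<in> N \<rightarrow>\<^sub>M K"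
    and d: "(\<lambda>z. d (fst z) (snd z)) \<in> borel_measurable (M \<Otimes>\<^sub>M N)"
    and d': "(\<lambda>z. d' (fst z) (snd z)) \<in> borel_measurable (K \<Otimes>\<^sub>M K)"
    and A: "A \<in> sets M" "A \<in> sets N" and AE_A: "AE x in M. x \<in> A" "AE x in N. x \<in> A"
    and lip: "\<And>a b. a \<in> A \<Longrightarrow> b \<in> A \<Longrightarrow> d' (g a) (g b) \<le> L * d a b"
    and nonneg: "\<And>a b. 0 \<le> d a b" "\<And>s t. 0 \<le> d' s t" and L: "0 \<le> L" and p: "0 < p"
  shows "transport_cost p d' (distr M K g) (distr N K g) \<le> ennreal (L powr p) * transport_cost p d M N"
proof -
  let ?cost = "\<lambda>C. \<integral>\<^sup>+ z. ennreal (d (fst z) (snd z) powr p) \<partial>C"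
  have "transport_cost p d' (distr M K g) (distr N K g) \<le> ennreal (L powr p) * ?cost C"
    if C: "C \<in> couplings M N" for C
  proof -
    have "AE z in C. fst z \<in> A" "AE z in C. snd z \<in> A"
      using AE_coupling_fst[OF C A(1) AE_A(1)] AE_coupling_snd[OF C A(2) AE_A(2)] .
    then have pointwise: "AE z in C. ennreal (d' (g (fst z)) (g (snd z)) powr p)
                 \<le> ennreal (L powr p) * ennreal (d (fst z) (snd z) powr p)"
    proof eventually_elim
      case (elim z)
      then have "d' (g (fst z)) (g (snd z)) powr p \<le> (L * d (fst z) (snd z)) powr p"
        using lip nonneg p by (intro powr_mono2) auto
      then show ?case
        using nonneg L by (simp add: powr_mult ennreal_mult'[symmetric] ennreal_leI)
    qed
    have "transport_cost p d' (distr M K g) (distr N K g)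
          \<le> \<integral>\<^sup>+ z. ennreal (d' (fst z) (snd z) powr p) \<partial>distr C (K \<Otimes>\<^sub>M K) (map_prod g g)"
      unfolding transport_cost_def by (rule INF_lower[OF distr_in_couplings[OF C gM gN]])
    also have "\<dots> = \<integral>\<^sup>+ z. ennreal (d' (g (fst z)) (g (snd z)) powr p) \<partial>C"
      using d' measurable_map_prod_coupling[OF C gM gN] by (simp add: nn_integral_distr)
    also have "\<dots> \<le> \<integral>\<^sup>+ z. ennreal (L powr p) * ennreal (d (fst z) (snd z) powr p) \<partial>C"
      using pointwise by (rule nn_integral_mono_AE)
    also have "\<dots> = ennreal (L powr p) * ?cost C"
    proof (rule nn_integral_cmult)
      show "(\<lambda>z. ennreal (d (fst z) (snd z) powr p)) \<in> borel_measurable C"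
        using d measurable_cong_sets[OF couplingsD(2)[OF C] refl]
        by (intro measurable_compose[OF _ measurable_ennreal] powr_real_measurable) auto
    qed
    finally show ?thesis .
  qed
  then have "transport_cost p d' (distr M K g) (distr N K g)
             \<le> (INF C \<in> couplings M N. ennreal (L powr p) * ?cost C)"
    by (rule INF_greatest)
  also have "\<dots> = ennreal (L powr p) * transport_cost p d M N"
    unfolding transport_cost_def
    using pair_measure_in_couplings[OF assms(1,2)] by (subst ennreal_mult_INF) auto
  finally show ?thesis .
qed

lemma wasserstein_distr_le:
  fixes d :: "'a \<Rightarrow> 'a \<Rightarrow> real" and d' :: "'b \<Rightarrow> 'b \<Rightarrow> real"
  assumes "prob_space M" "prob_space N"
    and "g \<in> M \<rightarrow>\<^sub>M K" "g \<in> N \<rightarrow>\<^sub>M K"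
    and "(\<lambda>z. d (fst z) (snd z)) \<in> borel_measurable (M \<Otimes>\<^sub>M N)"
    and "(\<lambda>z. d' (fst z) (snd z)) \<in> borel_measurable (K \<Otimes>\<^sub>M K)"
    and "A \<in> sets M" "A \<in> sets N" "AE x in M. x \<in> A" "AE x in N. x \<in> A"
    and "\<And>a b. a \<in> A \<Longrightarrow> b \<in> A \<Longrightarrow> d' (g a) (g b) \<le> L * d a b"
    and "\<And>a b. 0 \<le> d a b" "\<And>s t. 0 \<le> d' s t" and L: "0 \<le> L" and p: "0 < p"
    and finite: "transport_cost p d M N < \<infinity>"  \<comment> \<open>\<open>enn2real\<close> sends \<open>\<infinity>\<close> to 0\<close>
  shows "wasserstein p d' (distr M K g) (distr N K g) \<le> L * wasserstein p d M N"
proof -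
  let ?T = "transport_cost p d M N"
  have "enn2real (transport_cost p d' (distr M K g) (distr N K g)) \<le> enn2real (ennreal (L powr p) * ?T)"
    using transport_cost_distr_le[OF assms(1-15)] finite
    by (intro enn2real_mono) (auto simp: ennreal_mult_less_top)
  also have "\<dots> = L powr p * enn2real ?T"
    by (simp add: enn2real_mult)
  finally have "wasserstein p d' (distr M K g) (distr N K g) \<le> (L powr p * enn2real ?T) powr (1 / p)"
    unfolding wasserstein_eq_transport_cost using p by (intro powr_mono2) auto
  also have "\<dots> = L * wasserstein p d M N"
    unfolding wasserstein_eq_transport_cost using L p by (simp add: powr_mult powr_powr)
  finally show ?thesis .
qed

section \<open>Measures with finite p-th moment\<close>

lemma PpD:
  assumes "Q \<in> Pp p S"
  shows "sets Q = sets borel" "prob_space Q" "AE x in Q. x \<in> S"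
    "(\<integral>\<^sup>+ x. ennreal (norm x powr p) \<partial>Q) < \<infinity>"
  using assms unfolding Pp_def by auto

lemma powr_add_le:
  fixes x y p :: real
  assumes "0 \<le> x" "0 \<le> y" "0 < p"
  shows "(x + y) powr p \<le> 2 powr p * (x powr p + y powr p)"
proof -
  have "(x + y) powr p \<le> (2 * max x y) powr p"
    using assms by (intro powr_mono2) auto
  also have "\<dots> = 2 powr p * max x y powr p"
    using assms by (simp add: powr_mult)
  also have "\<dots> \<le> 2 powr p * (x powr p + y powr p)"
    by (intro mult_left_mono) (auto simp: max_def)
  finally show ?thesis .
qed

lemma transport_cost_finite:
  fixes M N :: "'a::real_normed_vector measure" and d :: "'a \<Rightarrow> 'a \<Rightarrow> real"
  assumes M: "M \<in> Pp p S" and N: "N \<in> Pp p T" and "0 < p" "0 \<le> c"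
    and d: "\<And>a b. 0 \<le> d a b" "\<And>a b. d a b \<le> c * norm (a - b)"
  shows "transport_cost p d M N < \<infinity>"
proof -
  define K where "K = (2 * c) powr p"
  let ?mom = "\<lambda>x::'a. ennreal (norm x powr p)"
  have bound: "d a b powr p \<le> K * norm a powr p + K * norm b powr p" for a b
  proof -
    have "d a b powr p \<le> (c * (norm a + norm b)) powr p"
      using d[of a b] norm_triangle_ineq4[of a b] assms(3,4)
      by (intro powr_mono2) (auto intro: order_trans mult_left_mono)
    also have "\<dots> = c powr p * (norm a + norm b) powr p"
      using assms(4) by (simp add: powr_mult)
    also have "\<dots> \<le> c powr p * (2 powr p * (norm a powr p + norm b powr p))"
      using assms(3) by (intro mult_left_mono powr_add_le) auto
    finally show ?thesis
      using assms(4) by (simp add: K_def powr_mult algebra_simps)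
  qed
  have C: "M \<Otimes>\<^sub>M N \<in> couplings M N"
    using pair_measure_in_couplings PpD(2)[OF M] PpD(2)[OF N] .
  have mom_M: "?mom \<in> borel_measurable M" and mom_N: "?mom \<in> borel_measurable N"
    using PpD(1)[OF M] PpD(1)[OF N] by (simp_all cong: measurable_cong_sets)
  have "transport_cost p d M N
      \<le> \<integral>\<^sup>+ z. ennreal (d (fst z) (snd z) powr p) \<partial>(M \<Otimes>\<^sub>M N)"
    unfolding transport_cost_def by (rule INF_lower[OF C])
  also have "\<dots> \<le> \<integral>\<^sup>+ z. ennreal K * ?mom (fst z) + ennreal K * ?mom (snd z)
                     \<partial>(M \<Otimes>\<^sub>M N)"
    using bound by (intro nn_integral_mono)
      (simp add: K_def ennreal_mult'[symmetric] ennreal_plus[symmetric] ennreal_leI del: ennreal_plus)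
  also have "\<dots> = ennreal K * (\<integral>\<^sup>+ x. ?mom x \<partial>M) + ennreal K * (\<integral>\<^sup>+ x. ?mom x \<partial>N)"
    using mom_M mom_N measurable_fst_coupling[OF C] measurable_snd_coupling[OF C]
    by (simp add: nn_integral_add nn_integral_cmult nn_integral_coupling_fst[OF C mom_M]
        nn_integral_coupling_snd[OF C mom_N] del: borel_measurable_ennreal_iff)
  also have "\<dots> < \<infinity>"
    using PpD(4)[OF M] PpD(4)[OF N] by (simp add: ennreal_mult_less_top)
  finally show ?thesis .
qed

lemma wasserstein_distr_qnorm_le:
  fixes M N :: "(real ^ 'n) measure" and g :: "real ^ 'n \<Rightarrow> real"
  assumes M: "M \<in> Pp p S" and N: "N \<in> Pp p T" and p: "1 \<le> p" and q: "1 \<le> q" and L: "0 \<le> L"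
    and g: "g \<in> borel_measurable borel"
    and A: "A \<in> sets borel" and AE_A: "AE x in M. x \<in> A" "AE x in N. x \<in> A"
    and lip: "\<And>a b. a \<in> A \<Longrightarrow> b \<in> A \<Longrightarrow> \<bar>g a - g b\<bar> \<le> L * qnorm q (a - b)"
  shows "wasserstein p (\<lambda>s t. \<bar>s - t\<bar>) (distr M borel g) (distr N borel g)
         \<le> L * wasserstein p (\<lambda>\<xi> \<zeta>. qnorm q (\<xi> - \<zeta>)) M N"
proof (rule wasserstein_distr_le[where d="\<lambda>\<xi> \<zeta>. qnorm q (\<xi> - \<zeta>)" and d'="\<lambda>s t. \<bar>s - t\<bar>",
      OF PpD(2)[OF M] PpD(2)[OF N] _ _ _ _ _ _ AE_A lip qnorm_nonneg _ L])
  show "g \<in> borel_measurable M" "g \<in> borel_measurable N" "A \<in> sets M" "A \<in> sets N"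
    using g A PpD(1)[OF M] PpD(1)[OF N] by (simp_all cong: measurable_cong_sets)
  have "(\<lambda>z. fst z - snd z)
      \<in> borel_measurable (borel \<Otimes>\<^sub>M borel :: ((real ^ 'n) \<times> (real ^ 'n)) measure)"
    by measurable
  from measurable_compose[OF this borel_measurable_qnorm]
  show "(\<lambda>z. qnorm q (fst z - snd z)) \<in> borel_measurable (M \<Otimes>\<^sub>M N)"
    using PpD(1)[OF M] PpD(1)[OF N] by (simp cong: sets_pair_measure_cong measurable_cong_sets)
  show "(\<lambda>z. \<bar>fst z - snd z\<bar>) \<in> borel_measurable (borel \<Otimes>\<^sub>M borel :: (real \<times> real) measure)"
    by measurable
  show "\<And>s t :: real. 0 \<le> \<bar>s - t\<bar>" "0 < p"
    using p by simp_all
  show "transport_cost p (\<lambda>\<xi> \<zeta>. qnorm q (\<xi> - \<zeta>)) M N < \<infinity>"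
    using M N p qnorm_le_card_norm[OF q]
    by (intro transport_cost_finite[where c="real CARD('n)"]) (auto simp: qnorm_nonneg)
qed

lemma lipschitz_on_powr_norm_le:
  fixes g :: "'a::real_normed_vector \<Rightarrow> 'b::real_normed_vector"
  assumes lip: "lipschitz_on C A g" and "a0 \<in> A" "x \<in> A" "0 < p"
  shows "norm (g x) powr p
         \<le> 2 powr p * (norm (g a0) + C * norm a0) powr p + (2 * C) powr p * norm x powr p"
proof -
  define \<alpha> where "\<alpha> = norm (g a0) + C * norm a0"
  have "0 \<le> C"
    using lipschitz_on_nonneg[OF lip] .
  then have "0 \<le> \<alpha>"
    by (simp add: \<alpha>_def)
  have "norm (g x) \<le> norm (g a0) + C * dist x a0"
    using lipschitz_onD[OF lip assms(3,2)] norm_triangle_ineq2[of "g x" "g a0"]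
    by (simp add: dist_norm)
  also have "\<dots> \<le> \<alpha> + C * norm x"
    using mult_left_mono[OF norm_triangle_ineq4[of x a0] \<open>0 \<le> C\<close>]
    by (simp add: \<alpha>_def dist_norm algebra_simps)
  finally have "norm (g x) powr p \<le> (\<alpha> + C * norm x) powr p"
    using assms(4) by (intro powr_mono2) auto
  also have "\<dots> \<le> 2 powr p * (\<alpha> powr p + (C * norm x) powr p)"
    using \<open>0 \<le> \<alpha>\<close> \<open>0 \<le> C\<close> assms(4) by (intro powr_add_le) auto
  finally show ?thesis
    using \<open>0 \<le> C\<close> by (simp add: \<alpha>_def powr_mult algebra_simps)
qed

lemma distr_in_Pp:
  fixes Q :: "'a::real_normed_vector measure" and g :: "'a \<Rightarrow> 'b::real_normed_vector"
  assumes Q: "Q \<in> Pp p S" and "0 < p" and g: "g \<in> borel_measurable borel"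
    and lip: "lipschitz_on C A g" and "A \<noteq> {}" and AE_A: "AE x in Q. x \<in> A"
    and "g ` A \<subseteq> T" "g ` A \<in> sets borel"
  shows "distr Q borel g \<in> Pp p T"
proof -
  interpret prob_space Q
    using PpD(2)[OF Q] .
  have g_Q: "g \<in> borel_measurable Q"
    using g PpD(1)[OF Q] by (simp cong: measurable_cong_sets)
  obtain a0 where "a0 \<in> A"
    using \<open>A \<noteq> {}\<close> by blast
  define \<alpha> where "\<alpha> = norm (g a0) + C * norm a0"
  note growth = lipschitz_on_powr_norm_le[OF lip \<open>a0 \<in> A\<close> _ \<open>0 < p\<close>, folded \<alpha>_def]
  have "(\<integral>\<^sup>+ y. ennreal (norm y powr p) \<partial>distr Q borel g)
      = (\<integral>\<^sup>+ x. ennreal (norm (g x) powr p) \<partial>Q)"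
    using g_Q by (simp add: nn_integral_distr)
  also have "\<dots> \<le> (\<integral>\<^sup>+ x. ennreal (2 powr p * \<alpha> powr p)
                          + ennreal ((2 * C) powr p) * ennreal (norm x powr p) \<partial>Q)"
    using AE_A by (intro nn_integral_mono_AE) (auto elim!: eventually_mono dest!: growth
        simp: ennreal_plus[symmetric] ennreal_mult'[symmetric] ennreal_leI simp del: ennreal_plus)
  also have "\<dots> = ennreal (2 powr p * \<alpha> powr p)
                    + ennreal ((2 * C) powr p) * (\<integral>\<^sup>+ x. ennreal (norm x powr p) \<partial>Q)"
    using PpD(1)[OF Q]
    by (simp add: nn_integral_add nn_integral_cmult emeasure_space_1 cong: measurable_cong_sets)
  also have "\<dots> < \<infinity>"
    using PpD(4)[OF Q] by (simp add: ennreal_mult_less_top)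
  finally have moment: "(\<integral>\<^sup>+ y. ennreal (norm y powr p) \<partial>distr Q borel g) < \<infinity>" .
  have "AE y in distr Q borel g. y \<in> g ` A"
    using AE_A \<open>g ` A \<in> sets borel\<close> by (subst AE_distr_iff[OF g_Q]) (auto elim!: eventually_mono)
  then have "AE y in distr Q borel g. y \<in> T"
    using \<open>g ` A \<subseteq> T\<close> by (auto elim!: eventually_mono)
  with moment show ?thesis
    unfolding Pp_def using prob_space_distr[OF g_Q] by simp
qed

section \<open>Empirical measures\<close>

lemma set_pmf_of_set_lessThan: "0 < (N::nat) \<Longrightarrow> set_pmf (pmf_of_set {..<N}) = {..<N}"
  by (rule set_pmf_of_set) auto

lemma sets_empirical [simp, measurable_cong]: "sets (empirical N pts) = sets borel"
  by (simp add: empirical_def)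

lemma prob_space_empirical: "prob_space (empirical N pts)"
  unfolding empirical_def by (rule prob_space.prob_space_distr) (simp_all add: prob_space_measure_pmf)

lemma AE_empirical:
  fixes pts :: "nat \<Rightarrow> 'a::t1_space"
  assumes "0 < N"
  shows "AE x in empirical N pts. x \<in> pts ` {..<N}"
  unfolding empirical_def using assms
  by (subst AE_distr_iff) (auto simp: AE_measure_pmf_iff set_pmf_of_set_lessThan finite_imp_closed)

lemma nn_integral_empirical:
  assumes "0 < N" "h \<in> borel_measurable borel"
  shows "(\<integral>\<^sup>+ x. h x \<partial>empirical N pts) = (\<Sum>i<N. h (pts i)) / of_nat N"
  unfolding empirical_def using assms
  by (simp add: nn_integral_distr) (subst nn_integral_pmf_of_set; auto)

lemma empirical_cong:
  assumes "0 < N" "\<And>i. i < N \<Longrightarrow> pts i = pts' i"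
  shows "empirical N pts = empirical N pts'"
  unfolding empirical_def using assms
  by (intro distr_cong_AE) (auto simp: AE_measure_pmf_iff set_pmf_of_set_lessThan)

lemma distr_empirical:
  assumes "g \<in> borel_measurable borel"
  shows "distr (empirical N pts) borel g = empirical N (\<lambda>i. g (pts i))"
  unfolding empirical_def using assms by (simp add: distr_distr comp_def)

lemma empirical_in_Pp:
  fixes pts :: "nat \<Rightarrow> 'a::real_normed_vector"
  assumes "0 < N" "\<And>i. i < N \<Longrightarrow> pts i \<in> S"
  shows "empirical N pts \<in> Pp p S"
proof -
  have "AE x in empirical N pts. x \<in> S"
    using AE_empirical[OF assms(1)] by eventually_elim (use assms(2) in auto)
  moreover have "(\<integral>\<^sup>+ x. ennreal (norm x powr p) \<partial>empirical N pts) < \<infinity>"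
    using assms(1)
    by (simp add: nn_integral_empirical ennreal_of_nat_eq_real_of_nat divide_ennreal sum_nonneg)
  ultimately show ?thesis
    unfolding Pp_def using prob_space_empirical by auto
qed

section \<open>Borel modifications\<close>

lemma AE_in_sigma_compact_subset:
  fixes Q :: "'a::{second_countable_topology, complete_space} measure"
  assumes "prob_space Q" and sets_Q: "sets Q = sets borel" and "AE x in Q. x \<in> S"
  obtains K :: "nat \<Rightarrow> 'a set"
  where "\<And>k. compact (K k)" "\<And>k. K k \<subseteq> S" "AE x in Q. x \<in> (\<Union>k. K k)"
proof -
  interpret prob_space Q by fact
  have space_Q: "space Q = UNIV"
    using sets_eq_imp_space_eq[OF sets_Q] by simp
  from assms(3) obtain Z where Z: "{x \<in> space Q. x \<notin> S} \<subseteq> Z" "Z \<in> sets Q" "emeasure Q Z = 0"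
    by (auto elim!: AE_E)
  define B where "B = UNIV - Z"
  have "B \<subseteq> S" "B \<in> sets borel" "emeasure Q B = 1"
    using Z space_Q prob_compl[OF Z(2)] sets_Q
    by (auto simp: B_def emeasure_eq_measure sets.compl_sets[of Z Q, simplified space_Q])
  have "\<exists>K. K \<subseteq> B \<and> compact K \<and> 1 - 1 / real (Suc k) < measure Q K" for k
  proof -
    have "ennreal (1 - 1 / real (Suc k)) < (SUP K \<in> {K. K \<subseteq> B \<and> compact K}. emeasure Q K)"
      using inner_regular[OF sets_Q _ \<open>B \<in> sets borel\<close>] \<open>emeasure Q B = 1\<close>
      by (simp add: ennreal_lessI)
    then show ?thesis
      by (auto simp: less_SUP_iff emeasure_eq_measure ennreal_less_iff)
  qed
  then obtain K where K: "\<And>k. K k \<subseteq> B" "\<And>k. compact (K k)"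
    and large: "\<And>k. 1 - 1 / real (Suc k) < measure Q (K k)"
    by metis
  have K_sets: "K k \<in> sets Q" for k
    using K(2) sets_Q by (simp add: borel_compact)
  have "1 \<le> prob (\<Union>k. K k)"
  proof (rule ccontr)
    assume "\<not> 1 \<le> prob (\<Union>k. K k)"
    then obtain k where "inverse (real (Suc k)) < 1 - prob (\<Union>k. K k)"
      using reals_Archimedean[of "1 - prob (\<Union>k. K k)"] by auto
    moreover have "prob (K k) \<le> prob (\<Union>k. K k)"
      using K_sets by (intro finite_measure_mono) auto
    ultimately show False
      using large[of k] unfolding inverse_eq_divide by linarith
  qed
  then have "AE x in Q. x \<in> (\<Union>k. K k)"
    using prob_le_1 by (intro AE_prob_1) (simp add: antisym)
  with K \<open>B \<subseteq> S\<close> that show thesis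
    by blast
qed

lemma AE_in_borel_subset_with_borel_image:
  fixes Q :: "'a::{second_countable_topology, complete_space} measure" and f :: "'a \<Rightarrow> 'b::t2_space"
  assumes "prob_space Q" "sets Q = sets borel" "AE x in Q. x \<in> S"
    and "continuous_on S f" "finite F" "F \<subseteq> S"
  obtains A where "F \<subseteq> A" "A \<subseteq> S" "A \<in> sets borel" "f ` A \<in> sets borel" "AE x in Q. x \<in> A"
proof -
  obtain K :: "nat \<Rightarrow> 'a set" where K: "\<And>k. compact (K k)" "\<And>k. K k \<subseteq> S"
    and AE_K: "AE x in Q. x \<in> (\<Union>k. K k)"
    using AE_in_sigma_compact_subset[OF assms(1-3)] by blast
  define A where "A = (\<Union>k. K k) \<union> F"
  have "f ` K k \<in> sets borel" for k
    using borel_compact[OF compact_continuous_image[OF continuous_on_subset[OF assms(4) K(2)] K(1)]] .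
  moreover have "f ` A = (\<Union>k. f ` K k) \<union> f ` F"
    by (auto simp: A_def)
  ultimately have "f ` A \<in> sets borel"
    using assms(5) by (auto intro: borel_closed finite_imp_closed)
  moreover have "A \<in> sets borel"
    using K assms(5) unfolding A_def
    by (intro sets.Un sets.countable_UN) (auto simp: borel_compact finite_imp_compact)
  moreover have "AE x in Q. x \<in> A"
    using AE_K by (auto simp: A_def elim!: eventually_mono)
  moreover have "F \<subseteq> A" "A \<subseteq> S"
    using K(2) assms(6) by (auto simp: A_def)
  ultimately show thesis
    using that by blast
qed

lemma integral_completion_AE_eq:
  fixes f g :: "'a \<Rightarrow> 'b::{banach, second_countable_topology}"
  assumes g: "g \<in> borel_measurable M" and eq: "AE x in M. f x = g x"
  shows "(\<integral>x. f x \<partial>completion M) = (\<integral>x. g x \<partial>M)"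
proof -
  have f: "f \<in> borel_measurable (completion M)"
  proof (rule measurableI)
    fix B :: "'b set" assume "B \<in> sets borel"
    then have "g -` B \<inter> space M \<in> sets (completion M)"
      using g by (simp add: measurable_sets)
    then show "f -` B \<inter> space (completion M) \<in> sets (completion M)"
      by (rule completion.in_sets_AE[rotated]) (use eq in \<open>auto simp: AE_completion_iff elim!: eventually_mono\<close>)
  qed simp
  have "(\<integral>x. f x \<partial>completion M) = (\<integral>x. g x \<partial>completion M)"
    using f measurable_completion[OF g] eq by (intro integral_cong_AE) (auto intro: AE_completion)
  also have "\<dots> = (\<integral>x. g x \<partial>M)"
    by (rule integral_completion[OF g])
  finally show ?thesis .
qed

lemma pushforward_in_wball:
  fixes f :: "real ^ 'n \<Rightarrow> real" and \<xi>hat :: "nat \<Rightarrow> real ^ 'n"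
  assumes p: "1 \<le> p" and q: "1 \<le> q" and N: "0 < N" and pts: "\<And>i. i < N \<Longrightarrow> \<xi>hat i \<in> \<Xi>"
    and L: "0 \<le> L"
    and lip: "\<And>a b. a \<in> \<Xi> \<Longrightarrow> b \<in> \<Xi> \<Longrightarrow> \<bar>f a - f b\<bar> \<le> L * qnorm q (a - b)"
    and Q: "Q \<in> wball p (\<lambda>\<xi> \<zeta>. qnorm q (\<xi> - \<zeta>)) \<Xi> (empirical N \<xi>hat) \<epsilon>"
  obtains Q' where "Q' \<in> wball p (\<lambda>s t. \<bar>s - t\<bar>) (f ` \<Xi>) (empirical N (\<lambda>i. f (\<xi>hat i))) (\<epsilon> * L)"
    and "(\<integral>\<xi>. f \<xi> \<partial>completion Q) = (\<integral>\<zeta>. \<zeta> \<partial>Q')"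
proof -
  let ?P = "empirical N \<xi>hat"
  have Q_Pp: "Q \<in> Pp p \<Xi>" and W: "wasserstein p (\<lambda>\<xi> \<zeta>. qnorm q (\<xi> - \<zeta>)) Q ?P \<le> \<epsilon>"
    using Q by (auto simp: wball_def)
  have P_Pp: "?P \<in> Pp p \<Xi>"
    using empirical_in_Pp N pts .
  have lip_\<Xi>: "lipschitz_on (L * CARD('n)) \<Xi> f"
    using lipschitz_on_qnorm q L lip .
  have "finite (\<xi>hat ` {..<N})" "\<xi>hat ` {..<N} \<subseteq> \<Xi>"
    using pts by auto
  then obtain A where A: "\<xi>hat ` {..<N} \<subseteq> A" "A \<subseteq> \<Xi>" "A \<in> sets borel" "f ` A \<in> sets borel"
    and AE_Q: "AE x in Q. x \<in> A"
    using AE_in_borel_subset_with_borel_image[OF PpD(2,1,3)[OF Q_Pp] lipschitz_on_continuous_on[OF lip_\<Xi>]]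
    by blast
  have AE_P: "AE x in ?P. x \<in> A"
    using AE_empirical[OF N, of \<xi>hat] A(1) by (auto elim!: eventually_mono)
  define g where "g \<xi> = (if \<xi> \<in> A then f \<xi> else 0)" for \<xi>
  have g: "g \<in> borel_measurable borel"
    unfolding g_def using continuous_on_subset[OF lipschitz_on_continuous_on[OF lip_\<Xi>] A(2)]
    by (intro borel_measurable_continuous_on_if A(3)) simp_all
  have g_A: "g ` A = f ` A"
    by (auto simp: g_def)
  have lip_A: "\<bar>g a - g b\<bar> \<le> L * qnorm q (a - b)" if "a \<in> A" "b \<in> A" for a b
    using lip that A(2) by (auto simp: g_def)
  have g_Q: "g \<in> borel_measurable Q"
    using g PpD(1)[OF Q_Pp] by (simp cong: measurable_cong_sets)
  define Q' where "Q' = distr Q borel g"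
  have "Q' \<in> Pp p (f ` \<Xi>)"
    unfolding Q'_def using A(1,2,4) p N lip_A g_A
    by (intro distr_in_Pp[OF Q_Pp _ g lipschitz_on_qnorm[OF q L] _ AE_Q]) auto
  moreover have "distr ?P borel g = empirical N (\<lambda>i. f (\<xi>hat i))"
    using A(1) N by (auto simp: distr_empirical[OF g] g_def intro!: empirical_cong)
  moreover have "wasserstein p (\<lambda>s t. \<bar>s - t\<bar>) Q' (distr ?P borel g)
      \<le> L * wasserstein p (\<lambda>\<xi> \<zeta>. qnorm q (\<xi> - \<zeta>)) Q ?P"
    unfolding Q'_def by (rule wasserstein_distr_qnorm_le[OF Q_Pp P_Pp p q L g A(3) AE_Q AE_P lip_A])
  ultimately have "Q' \<in> wball p (\<lambda>s t. \<bar>s - t\<bar>) (f ` \<Xi>) (empirical N (\<lambda>i. f (\<xi>hat i))) (\<epsilon> * L)"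
    using mult_left_mono[OF W L] by (auto simp: wball_def mult.commute)
  moreover have "(\<integral>\<xi>. f \<xi> \<partial>completion Q) = (\<integral>\<zeta>. \<zeta> \<partial>Q')"
  proof -
    have "(\<integral>\<xi>. f \<xi> \<partial>completion Q) = (\<integral>\<xi>. g \<xi> \<partial>Q)"
      using AE_Q by (intro integral_completion_AE_eq[OF g_Q]) (auto simp: g_def elim!: eventually_mono)
    then show ?thesis
      unfolding Q'_def using g_Q by (simp add: integral_distr)
  qed
  ultimately show thesis
    by (rule that)
qed

theorem proposition1:
  fixes p :: real and q :: ereal and \<epsilon> :: real
    and \<Xi> :: "(real ^ 'n) set" and X :: "(real ^ 'm) set"
    and F :: "real ^ 'm \<Rightarrow> real ^ 'n \<Rightarrow> real"
    and N :: nat and \<xi>hat :: "nat \<Rightarrow> real ^ 'n" and x :: "real ^ 'm"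
  assumes "p \<ge> 1" and "q \<ge> 1" and "\<epsilon> \<ge> 0" and "N > 0"
    and "\<forall>i<N. \<xi>hat i \<in> \<Xi>"
    and "\<forall>y\<in>X. lipnorm q \<Xi> (F y) < \<infinity>"
    and "x \<in> X"
  shows "(SUP Q \<in> wball p (\<lambda>\<xi> \<zeta>. qnorm q (\<xi> - \<zeta>)) \<Xi> (empirical N \<xi>hat) \<epsilon>.
            ereal (\<integral>\<xi>. F x \<xi> \<partial>(completion Q)))
         \<le> (SUP Q \<in> wball p (\<lambda>s t. \<bar>s - t\<bar>) (F x ` \<Xi>) (empirical N (\<lambda>i. F x (\<xi>hat i)))
                       (\<epsilon> * real_of_ereal (lipnorm q \<Xi> (F x))).
            ereal (\<integral>\<zeta>. \<zeta> \<partial>Q))"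
proof (rule SUP_least)
  fix Q assume Q: "Q \<in> wball p (\<lambda>\<xi> \<zeta>. qnorm q (\<xi> - \<zeta>)) \<Xi> (empirical N \<xi>hat) \<epsilon>"
  have "lipnorm q \<Xi> (F x) < \<infinity>"
    using assms(6,7) by blast
  then obtain Q' where
    "Q' \<in> wball p (\<lambda>s t. \<bar>s - t\<bar>) (F x ` \<Xi>) (empirical N (\<lambda>i. F x (\<xi>hat i)))
            (\<epsilon> * real_of_ereal (lipnorm q \<Xi> (F x)))"
    and "(\<integral>\<xi>. F x \<xi> \<partial>completion Q) = (\<integral>\<zeta>. \<zeta> \<partial>Q')"
    using pushforward_in_wball[OF assms(1,2,4) _ lipnorm_nonneg abs_diff_le_lipnorm Q] assms(5)
    by blast
  then show "ereal (\<integral>\<xi>. F x \<xi> \<partial>completion Q)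
      \<le> (SUP Q \<in> wball p (\<lambda>s t. \<bar>s - t\<bar>) (F x ` \<Xi>) (empirical N (\<lambda>i. F x (\<xi>hat i)))
            (\<epsilon> * real_of_ereal (lipnorm q \<Xi> (F x))). ereal (\<integral>\<zeta>. \<zeta> \<partial>Q))"
    by (auto intro: SUP_upper2)
qed

end
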